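(* Let $G$ be a connected graph. If some graph equimorphic to $G$ is not connected, then there are infinitely many pairwise non-isomorphic graphs equimorphic to $G$.
   Context: Graphs are undirected and loopless. $G$ embeds into $G'$ if $G$ is isomorphic to an induced subgraph of $G'$; $G,G'$ are equimorphic if each embeds into the other. *)

theory Defs
  imports Main
begin

type_synonym 'a graph = "'a set \<times> ('a \<Rightarrow> 'a \<Rightarrow> bool)"

definition verts :: "'a graph \<Rightarrow> 'a set" where "verts G = fst G"
definition adj :: "'a graph \<Rightarrow> 'a \<Rightarrow> 'a \<Rightarrow> bool" where "adj G = snd G"

definition is_graph :: "'a graph \<Rightarrow> bool" where
  "is_graph G \<longleftrightarrow>
     (\<forall>x y. adj G x y \<longrightarrow> x \<in> verts G \<and> y \<in> verts G) \<and>
     (\<forall>x y. adj G x y \<longrightarrow> adj G y x) \<and>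
     (\<forall>x. \<not> adj G x x)"

text \<open>G embeds into H: G is isomorphic to an induced subgraph of H.\<close>
definition embeds :: "'a graph \<Rightarrow> 'b graph \<Rightarrow> bool" where
  "embeds G H \<longleftrightarrow> (\<exists>f. inj_on f (verts G) \<and> f ` verts G \<subseteq> verts H \<and>
     (\<forall>x\<in>verts G. \<forall>y\<in>verts G. adj G x y \<longleftrightarrow> adj H (f x) (f y)))"

definition equimorphic :: "'a graph \<Rightarrow> 'b graph \<Rightarrow> bool" where
  "equimorphic G H \<longleftrightarrow> embeds G H \<and> embeds H G"

definition isomorphic :: "'a graph \<Rightarrow> 'b graph \<Rightarrow> bool" where
  "isomorphic G H \<longleftrightarrow> (\<exists>f. bij_betw f (verts G) (verts H) \<and>
     (\<forall>x\<in>verts G. \<forall>y\<in>verts G. adj G x y \<longleftrightarrow> adj H (f x) (f y)))"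

definition connected_graph :: "'a graph \<Rightarrow> bool" where
  "connected_graph G \<longleftrightarrow> verts G \<noteq> {} \<and>
     (\<forall>x\<in>verts G. \<forall>y\<in>verts G. (adj G)\<^sup>*\<^sup>* x y)"

end

theory Submission
  imports Defs
begin

text \<open>Let \<open>\<phi> : H \<rightarrow> G\<close> and \<open>\<psi> : G \<rightarrow> H\<close> be embeddings. As \<open>G\<close> is connected,
  \<open>\<psi>(G)\<close> lies in one component of \<open>H\<close>; let \<open>D\<close> be another one. Then \<open>g = \<phi> \<circ> \<psi>\<close> is a
  self-embedding of \<open>G\<close>, and \<open>B = \<phi>(D)\<close> is a connected set of vertices of \<open>G\<close> that is
  disjoint from \<open>g(G)\<close> and has no edge to it. The subgraph of \<open>G\<close> induced by
  \<open>B \<union> g(B) \<union> \<dots> \<union> g\<^sup>n\<^sup>-\<^sup>1(B) \<union> g\<^sup>n(G)\<close> embeds into \<open>G\<close> and contains the copy \<open>g\<^sup>n(G)\<close>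
  of \<open>G\<close>. Transporting the separation of \<open>B\<close> from \<open>g(G)\<close> along \<open>g\<^sup>i\<close> separates
  \<open>g\<^sup>i(B)\<close> from \<open>g\<^sup>j(G)\<close> for all \<open>j > i\<close>, so this graph has exactly \<open>n + 1\<close> components.
  Hence distinct \<open>n\<close> give non-isomorphic graphs equimorphic to \<open>G\<close>.\<close>

lemma is_graph_adj_verts:
  "is_graph G \<Longrightarrow> adj G x y \<Longrightarrow> x \<in> verts G \<and> y \<in> verts G"
  unfolding is_graph_def by blast

lemma is_graph_adj_sym: "is_graph G \<Longrightarrow> adj G x y \<Longrightarrow> adj G y x"
  unfolding is_graph_def by blast

lemma is_graph_reach_sym:
  assumes "is_graph G" and "(adj G)\<^sup>*\<^sup>* x y"
  shows "(adj G)\<^sup>*\<^sup>* y x"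
proof -
  have "symp (adj G)" by (rule sympI) (rule is_graph_adj_sym[OF assms(1)])
  then show ?thesis using assms(2) by (rule sympD[OF symp_rtranclp])
qed

lemma is_graph_reach_verts:
  assumes "is_graph G" and "(adj G)\<^sup>*\<^sup>* x y" and "x \<in> verts G"
  shows "y \<in> verts G"
  using assms(2,3)
proof induction
  case (step y z)
  then show ?case using is_graph_adj_verts[OF assms(1)] by blast
qed

definition is_embedding :: "('a \<Rightarrow> 'b) \<Rightarrow> 'a graph \<Rightarrow> 'b graph \<Rightarrow> bool" where
  "is_embedding f G H \<longleftrightarrow> inj_on f (verts G) \<and> f ` verts G \<subseteq> verts H \<and>
     (\<forall>x\<in>verts G. \<forall>y\<in>verts G. adj G x y \<longleftrightarrow> adj H (f x) (f y))"

lemma embeds_iff_is_embedding: "embeds G H \<longleftrightarrow> (\<exists>f. is_embedding f G H)"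
  unfolding embeds_def is_embedding_def ..

lemma is_embedding_inj: "is_embedding f G H \<Longrightarrow> inj_on f (verts G)"
  unfolding is_embedding_def by blast

lemma is_embedding_verts: "is_embedding f G H \<Longrightarrow> x \<in> verts G \<Longrightarrow> f x \<in> verts H"
  unfolding is_embedding_def by blast

lemma is_embedding_adj:
  "is_embedding f G H \<Longrightarrow> x \<in> verts G \<Longrightarrow> y \<in> verts G \<Longrightarrow> adj H (f x) (f y) \<longleftrightarrow> adj G x y"
  unfolding is_embedding_def by blast

lemma is_embedding_comp:
  assumes f: "is_embedding f G H" and h: "is_embedding h H K"
  shows "is_embedding (h \<circ> f) G K"
  unfolding is_embedding_def
proof (intro conjI ballI)
  have "f ` verts G \<subseteq> verts H" using is_embedding_verts[OF f] by blast
  then show "inj_on (h \<circ> f) (verts G)"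
    using is_embedding_inj[OF f] is_embedding_inj[OF h] by (blast intro: comp_inj_on inj_on_subset)
  show "(h \<circ> f) ` verts G \<subseteq> verts K"
    using is_embedding_verts[OF f] is_embedding_verts[OF h] by auto
  fix x y assume "x \<in> verts G" "y \<in> verts G"
  then show "adj G x y \<longleftrightarrow> adj K ((h \<circ> f) x) ((h \<circ> f) y)"
    using is_embedding_adj[OF f] is_embedding_adj[OF h] is_embedding_verts[OF f] by simp
qed

lemma is_embedding_funpow:
  assumes "is_embedding g G G"
  shows "is_embedding (g ^^ n) G G"
proof (induction n)
  case 0
  show ?case unfolding is_embedding_def by simp
next
  case (Suc n)
  show ?case unfolding funpow.simps(2) using Suc assms by (rule is_embedding_comp)
qed

lemma is_embedding_reach:
  assumes "is_graph G" and "is_embedding f G H" and "(adj G)\<^sup>*\<^sup>* x y"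
  shows "(adj H)\<^sup>*\<^sup>* (f x) (f y)"
  using assms(3)
proof induction
  case (step y z)
  then have "adj H (f y) (f z)"
    using is_graph_adj_verts[OF assms(1)] is_embedding_adj[OF assms(2)] by blast
  with step.IH show ?case by (rule rtranclp.rtrancl_into_rtrancl)
qed simp

lemma isomorphic_obtain_embeddings:
  assumes "isomorphic G H"
  obtains f h where "is_embedding f G H" and "is_embedding h H G"
    and "\<And>x. x \<in> verts G \<Longrightarrow> h (f x) = x" and "\<And>y. y \<in> verts H \<Longrightarrow> f (h y) = y"
proof -
  obtain f where bij: "bij_betw f (verts G) (verts H)"
    and adj: "\<forall>x\<in>verts G. \<forall>y\<in>verts G. adj G x y \<longleftrightarrow> adj H (f x) (f y)"
    using assms unfolding isomorphic_def by blast
  define h where "h = inv_into (verts G) f"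
  have hbij: "bij_betw h (verts H) (verts G)"
    unfolding h_def using bij by (rule bij_betw_inv_into)
  have hf: "h (f x) = x" if "x \<in> verts G" for x
    using bij that unfolding h_def by (simp add: bij_betw_inv_into_left)
  have fh: "f (h y) = y" if "y \<in> verts H" for y
    using bij that unfolding h_def by (simp add: bij_betw_inv_into_right)
  have "is_embedding f G H"
    using bij adj unfolding is_embedding_def bij_betw_def by blast
  moreover have "is_embedding h H G"
    unfolding is_embedding_def
  proof (intro conjI ballI)
    show "inj_on h (verts H)" using hbij by (rule bij_betw_imp_inj_on)
    show "h ` verts H \<subseteq> verts G" using hbij by (simp add: bij_betw_def)
    fix x y assume x: "x \<in> verts H" and y: "y \<in> verts H"
    have "h x \<in> verts G" "h y \<in> verts G"
      using x y hbij by (meson bij_betw_apply)+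
    then have "adj G (h x) (h y) \<longleftrightarrow> adj H (f (h x)) (f (h y))" using adj by blast
    then show "adj H x y \<longleftrightarrow> adj G (h x) (h y)" using fh x y by simp
  qed
  ultimately show ?thesis using hf fh by (rule that)
qed

definition induced_subgraph :: "'a graph \<Rightarrow> 'a set \<Rightarrow> 'a graph" where
  "induced_subgraph G S = (S \<inter> verts G, \<lambda>x y. x \<in> S \<and> y \<in> S \<and> adj G x y)"

lemma verts_induced_subgraph [simp]: "verts (induced_subgraph G S) = S \<inter> verts G"
  by (simp add: induced_subgraph_def verts_def)

lemma adj_induced_subgraph [simp]:
  "adj (induced_subgraph G S) x y \<longleftrightarrow> x \<in> S \<and> y \<in> S \<and> adj G x y"
  by (simp add: induced_subgraph_def adj_def)

lemma is_graph_induced_subgraph: "is_graph G \<Longrightarrow> is_graph (induced_subgraph G S)"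
  unfolding is_graph_def by auto

lemma is_embedding_id_induced_subgraph: "is_embedding id (induced_subgraph G S) G"
  unfolding is_embedding_def by simp

lemma is_embedding_restrict:
  assumes "is_embedding f G H"
  shows "is_embedding f (induced_subgraph G S) H"
  unfolding is_embedding_def
proof (intro conjI ballI)
  show "inj_on f (verts (induced_subgraph G S))"
    using is_embedding_inj[OF assms] by (simp add: inj_on_Int)
  show "f ` verts (induced_subgraph G S) \<subseteq> verts H"
    using is_embedding_verts[OF assms] by auto
  fix x y assume "x \<in> verts (induced_subgraph G S)" "y \<in> verts (induced_subgraph G S)"
  then show "adj (induced_subgraph G S) x y \<longleftrightarrow> adj H (f x) (f y)"
    using is_embedding_adj[OF assms] by simp
qed

lemma is_embedding_into_induced_subgraph:
  assumes "is_embedding f G H" and "f ` verts G \<subseteq> S"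
  shows "is_embedding f G (induced_subgraph H S)"
  unfolding is_embedding_def
proof (intro conjI ballI)
  show "inj_on f (verts G)" using assms(1) by (rule is_embedding_inj)
  show "f ` verts G \<subseteq> verts (induced_subgraph H S)"
    using is_embedding_verts[OF assms(1)] assms(2) by auto
  fix x y assume "x \<in> verts G" "y \<in> verts G"
  then show "adj G x y \<longleftrightarrow> adj (induced_subgraph H S) (f x) (f y)"
    using is_embedding_adj[OF assms(1)] assms(2) by auto
qed

lemma is_embedding_image_reach:
  assumes "is_graph G" and "connected_graph G" and "is_embedding f G H"
    and "x \<in> f ` verts G" and "y \<in> f ` verts G"
  shows "(adj H)\<^sup>*\<^sup>* x y"
proof -
  obtain u v where "u \<in> verts G" "v \<in> verts G" "x = f u" "y = f v"
    using assms(4,5) by blast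
  moreover have "(adj G)\<^sup>*\<^sup>* u v"
    using assms(2) calculation(1,2) unfolding connected_graph_def by blast
  ultimately show ?thesis using assms(1,3) by (simp add: is_embedding_reach)
qed

lemma connected_graph_image:
  assumes "is_graph G" and "connected_graph G" and "is_embedding f G H"
  shows "connected_graph (induced_subgraph H (f ` verts G))"
  unfolding connected_graph_def
proof (intro conjI ballI)
  have "f ` verts G \<subseteq> verts H"
    using is_embedding_verts[OF assms(3)] by blast
  then have verts_eq: "verts (induced_subgraph H (f ` verts G)) = f ` verts G" by auto
  then show "verts (induced_subgraph H (f ` verts G)) \<noteq> {}"
    using assms(2) unfolding connected_graph_def by simp
  have emb: "is_embedding f G (induced_subgraph H (f ` verts G))"
    using assms(3) by (rule is_embedding_into_induced_subgraph) simp
  show "(adj (induced_subgraph H (f ` verts G)))\<^sup>*\<^sup>* x y"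
    if "x \<in> verts (induced_subgraph H (f ` verts G))"
      and "y \<in> verts (induced_subgraph H (f ` verts G))" for x y
    using that unfolding verts_eq by (rule is_embedding_image_reach[OF assms(1,2) emb])
qed

definition component :: "'a graph \<Rightarrow> 'a \<Rightarrow> 'a set" where
  "component G x = {y. (adj G)\<^sup>*\<^sup>* x y}"

lemma component_subset: "is_graph G \<Longrightarrow> x \<in> verts G \<Longrightarrow> component G x \<subseteq> verts G"
  unfolding component_def by (blast intro: is_graph_reach_verts)

lemma component_adj_closed:
  "y \<in> component G x \<Longrightarrow> adj G y z \<Longrightarrow> z \<in> component G x"
  unfolding component_def by (simp add: rtranclp.rtrancl_into_rtrancl)

lemma connected_graph_component:
  assumes "is_graph G" and "x \<in> verts G"
  shows "connected_graph (induced_subgraph G (component G x))"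
proof -
  let ?C = "induced_subgraph G (component G x)"
  have from_x: "(adj ?C)\<^sup>*\<^sup>* x y" if "(adj G)\<^sup>*\<^sup>* x y" for y
    using that
  proof induction
    case (step y z)
    then have "adj ?C y z" unfolding component_def by simp
    with step.IH show ?case by (rule rtranclp.rtrancl_into_rtrancl)
  qed simp
  have "(adj ?C)\<^sup>*\<^sup>* y z" if "y \<in> component G x" "z \<in> component G x" for y z
  proof -
    have "(adj ?C)\<^sup>*\<^sup>* y x"
      using that(1) from_x is_graph_reach_sym[OF is_graph_induced_subgraph[OF assms(1)]]
      unfolding component_def by blast
    moreover have "(adj ?C)\<^sup>*\<^sup>* x z"
      using that(2) from_x unfolding component_def by blast
    ultimately show ?thesis by (rule rtranclp_trans)
  qed
  moreover have "x \<in> verts ?C"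
    using assms(2) unfolding component_def by simp
  ultimately show ?thesis unfolding connected_graph_def by auto
qed

lemma not_connected_graph_obtain_far_vertex:
  assumes "is_graph G" and "x \<in> verts G" and "\<not> connected_graph G"
  obtains y where "y \<in> verts G" and "y \<notin> component G x"
proof -
  obtain u v where uv: "u \<in> verts G" "v \<in> verts G" "\<not> (adj G)\<^sup>*\<^sup>* u v"
    using assms(2,3) unfolding connected_graph_def by blast
  have "\<not> ((adj G)\<^sup>*\<^sup>* x u \<and> (adj G)\<^sup>*\<^sup>* x v)"
  proof
    assume "(adj G)\<^sup>*\<^sup>* x u \<and> (adj G)\<^sup>*\<^sup>* x v"
    then have "(adj G)\<^sup>*\<^sup>* u v"
      using is_graph_reach_sym[OF assms(1)] rtranclp_trans by metis
    with uv(3) show False ..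
  qed
  then show ?thesis
    using that uv(1,2) unfolding component_def by blast
qed

definition separated :: "'a graph \<Rightarrow> 'a set \<Rightarrow> bool" where
  "separated G X \<longleftrightarrow> X \<subseteq> verts G \<and> (\<forall>x\<in>X. \<forall>y\<in>X. (adj G)\<^sup>*\<^sup>* x y \<longrightarrow> x = y)"

definition at_least_components :: "nat \<Rightarrow> 'a graph \<Rightarrow> bool" where
  "at_least_components k G \<longleftrightarrow> (\<exists>X. separated G X \<and> finite X \<and> card X = k)"

lemma at_least_components_transfer:
  assumes "is_graph H" and f: "is_embedding f G H" and h: "is_embedding h H G"
    and hf: "\<And>x. x \<in> verts G \<Longrightarrow> h (f x) = x" and "at_least_components k G"
  shows "at_least_components k H"
proof -
  obtain X where X: "separated G X" "finite X" "card X = k"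
    using assms(5) unfolding at_least_components_def by blast
  then have X_verts: "X \<subseteq> verts G" unfolding separated_def by blast
  have "separated H (f ` X)"
    unfolding separated_def
  proof (intro conjI ballI impI)
    show "f ` X \<subseteq> verts H"
      using X_verts is_embedding_verts[OF f] by blast
    fix u v assume "u \<in> f ` X" "v \<in> f ` X" "(adj H)\<^sup>*\<^sup>* u v"
    then obtain x y where xy: "x \<in> X" "y \<in> X" "u = f x" "v = f y"
      and reach: "(adj H)\<^sup>*\<^sup>* (f x) (f y)"
      by blast
    from reach have "(adj G)\<^sup>*\<^sup>* (h (f x)) (h (f y))"
      by (rule is_embedding_reach[OF assms(1) h])
    then have "(adj G)\<^sup>*\<^sup>* x y"
      using xy(1,2) X_verts hf by (simp add: subset_iff)
    then show "u = v"
      using X(1) xy unfolding separated_def by blast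
  qed
  moreover have "card (f ` X) = k"
    using X(3) X_verts is_embedding_inj[OF f] by (simp add: card_image inj_on_subset)
  ultimately show ?thesis
    using X(2) unfolding at_least_components_def by blast
qed

lemma isomorphic_at_least_components_iff:
  assumes "is_graph G" and "is_graph H" and "isomorphic G H"
  shows "at_least_components k G \<longleftrightarrow> at_least_components k H"
proof -
  obtain f h where f: "is_embedding f G H" and h: "is_embedding h H G"
    and hf: "\<And>x. x \<in> verts G \<Longrightarrow> h (f x) = x" and fh: "\<And>y. y \<in> verts H \<Longrightarrow> f (h y) = y"
    using isomorphic_obtain_embeddings[OF assms(3)] by blast
  show ?thesis
    using at_least_components_transfer[OF assms(2) f h hf]
      at_least_components_transfer[OF assms(1) h f fh] by blast
qed

lemma at_least_components_of_closed_parts: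
  assumes "finite I" and "\<And>i. i \<in> I \<Longrightarrow> P i \<inter> verts G \<noteq> {}"
    and "\<And>i x y. i \<in> I \<Longrightarrow> x \<in> P i \<Longrightarrow> adj G x y \<Longrightarrow> y \<in> P i"
    and "\<And>i j. i \<in> I \<Longrightarrow> j \<in> I \<Longrightarrow> i \<noteq> j \<Longrightarrow> P i \<inter> P j = {}"
  shows "at_least_components (card I) G"
proof -
  define c where "c i = (SOME x. x \<in> P i \<inter> verts G)" for i
  have c: "c i \<in> P i \<inter> verts G" if "i \<in> I" for i
    unfolding c_def some_in_eq by (rule assms(2)[OF that])
  have reach_closed: "y \<in> P i" if "(adj G)\<^sup>*\<^sup>* x y" "i \<in> I" "x \<in> P i" for i x y
    using that(1,3)
  proof induction
    case (step y z)
    then show ?case using assms(3) that(2) by blast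
  qed
  have same_part: "i = j" if "i \<in> I" "j \<in> I" "c j \<in> P i" for i j
    using that c assms(4)[of i j] by (cases "i = j") auto
  have "inj_on c I"
  proof (rule inj_onI)
    fix i j assume "i \<in> I" "j \<in> I" "c i = c j"
    then have "c j \<in> P i" using c by force
    with \<open>i \<in> I\<close> \<open>j \<in> I\<close> show "i = j" by (rule same_part)
  qed
  moreover have "separated G (c ` I)"
    unfolding separated_def
  proof (intro conjI ballI impI)
    show "c ` I \<subseteq> verts G" using c by blast
    fix x y assume "x \<in> c ` I" "y \<in> c ` I" "(adj G)\<^sup>*\<^sup>* x y"
    then obtain i j where "i \<in> I" "j \<in> I" "x = c i" "y = c j" "c j \<in> P i"
      using reach_closed c by blast
    then show "x = y" using same_part by blast
  qed
  ultimately show ?thesis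
    using assms(1) card_image unfolding at_least_components_def by blast
qed

lemma not_at_least_components_of_connected_parts:
  assumes "finite I" and "verts G \<subseteq> (\<Union>i\<in>I. P i)"
    and "\<And>i x y. i \<in> I \<Longrightarrow> x \<in> P i \<Longrightarrow> y \<in> P i \<Longrightarrow> (adj G)\<^sup>*\<^sup>* x y"
    and "card I < k"
  shows "\<not> at_least_components k G"
proof
  assume "at_least_components k G"
  then obtain X where X: "separated G X" "finite X" "card X = k"
    unfolding at_least_components_def by blast
  define part where "part x = (SOME i. i \<in> I \<and> x \<in> P i)" for x
  have part: "part x \<in> I \<and> x \<in> P (part x)" if "x \<in> X" for x
  proof -
    have "\<exists>i. i \<in> I \<and> x \<in> P i"
      using that X(1) assms(2) unfolding separated_def by blast
    then show ?thesis unfolding part_def by (rule someI_ex)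
  qed
  have "inj_on part X"
  proof (rule inj_onI)
    fix x y assume xy: "x \<in> X" "y \<in> X" "part x = part y"
    have "part x \<in> I" "x \<in> P (part x)" using part xy(1) by auto
    moreover have "y \<in> P (part x)" unfolding xy(3) using part xy(2) by blast
    ultimately have "(adj G)\<^sup>*\<^sup>* x y" by (rule assms(3))
    then show "x = y" using X(1) xy unfolding separated_def by blast
  qed
  then have "card X \<le> card I"
    using part assms(1) by (intro card_inj_on_le) auto
  then show False using X(3) assms(4) by simp
qed

lemma at_least_components_mono:
  assumes "at_least_components k G" and "j \<le> k"
  shows "at_least_components j G"
proof -
  obtain X where X: "separated G X" "finite X" "card X = k"
    using assms(1) unfolding at_least_components_def by blast
  obtain Y where Y: "Y \<subseteq> X" "card Y = j"
    using obtain_subset_with_card_n[of j X] assms(2) X(3) by blast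
  have "separated G Y" using X(1) Y(1) unfolding separated_def by blast
  moreover have "finite Y" using X(2) Y(1) by (rule finite_subset[rotated])
  ultimately show ?thesis using Y(2) unfolding at_least_components_def by blast
qed

locale self_embedding_with_detached_part =
  fixes G :: "'a graph" and g :: "'a \<Rightarrow> 'a" and B :: "'a set"
  assumes graph: "is_graph G" and connected: "connected_graph G"
    and self_embedding: "is_embedding g G G"
    and part_subset: "B \<subseteq> verts G"
    and part_connected: "connected_graph (induced_subgraph G B)"
    and part_detached: "\<And>b v. b \<in> B \<Longrightarrow> v \<in> verts G \<Longrightarrow> b \<noteq> g v \<and> \<not> adj G b (g v)"
begin

definition layer_base :: "nat \<Rightarrow> nat \<Rightarrow> 'a graph" where
  "layer_base n i = (if i < n then induced_subgraph G B else G)"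

definition layer :: "nat \<Rightarrow> nat \<Rightarrow> 'a set" where
  "layer n i = (g ^^ i) ` verts (layer_base n i)"

definition tower :: "nat \<Rightarrow> 'a graph" where
  "tower n = induced_subgraph G (\<Union>i\<le>n. layer n i)"

lemma is_graph_layer_base: "is_graph (layer_base n i)"
  unfolding layer_base_def using graph by (simp add: is_graph_induced_subgraph)

lemma connected_graph_layer_base: "connected_graph (layer_base n i)"
  unfolding layer_base_def using connected part_connected by simp

lemma is_embedding_iterate: "is_embedding (g ^^ i) G G"
  using self_embedding by (rule is_embedding_funpow)

lemma is_embedding_layer_base: "is_embedding (g ^^ i) (layer_base n i) G"
  unfolding layer_base_def using is_embedding_iterate by (simp add: is_embedding_restrict)

lemma layer_subset: "layer n i \<subseteq> (g ^^ i) ` verts G"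
  unfolding layer_def layer_base_def by auto

lemma verts_tower: "verts (tower n) = (\<Union>i\<le>n. layer n i)"
proof -
  have "layer n i \<subseteq> verts G" for i
    using layer_subset is_embedding_verts[OF is_embedding_iterate] by blast
  then show ?thesis unfolding tower_def by auto
qed

lemma is_embedding_layer: "i \<le> n \<Longrightarrow> is_embedding (g ^^ i) (layer_base n i) (tower n)"
  unfolding tower_def
  by (rule is_embedding_into_induced_subgraph[OF is_embedding_layer_base])
    (auto simp: layer_def)

lemma layers_apart:
  assumes "i < j" and "j \<le> n" and "x \<in> layer n i" and "y \<in> layer n j"
  shows "x \<noteq> y \<and> \<not> adj G x y"
proof -
  obtain b where b: "b \<in> B" "x = (g ^^ i) b"
    using assms(1-3) unfolding layer_def layer_base_def by auto
  obtain v where v: "v \<in> verts G" "y = (g ^^ j) v"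
    using assms(4) layer_subset by blast
  obtain m where m: "j = i + Suc m"
    using assms(1) less_iff_Suc_add by auto
  define w where "w = (g ^^ m) v"
  \<comment> \<open>so the claim is \<open>part_detached\<close> for \<open>b\<close> and \<open>w\<close>, transported along \<open>g ^^ i\<close>\<close>
  have y: "y = (g ^^ i) (g w)"
    unfolding v(2) m w_def by (simp only: funpow_add funpow.simps(2) comp_apply)
  have w: "w \<in> verts G"
    unfolding w_def using v(1) by (rule is_embedding_verts[OF is_embedding_iterate])
  then have gw: "g w \<in> verts G" by (rule is_embedding_verts[OF self_embedding])
  have bG: "b \<in> verts G" using b(1) part_subset by blast
  have "b \<noteq> g w \<and> \<not> adj G b (g w)" using b(1) w by (rule part_detached)
  then show ?thesis
    unfolding b(2) y
    using is_embedding_adj[OF is_embedding_iterate bG gw]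
      inj_on_contraD[OF is_embedding_inj[OF is_embedding_iterate] _ bG gw]
    by blast
qed

lemma is_graph_tower: "is_graph (tower n)"
  unfolding tower_def using graph by (rule is_graph_induced_subgraph)

lemma equimorphic_tower: "equimorphic (tower n) G"
proof -
  have "is_embedding id (tower n) G"
    unfolding tower_def by (rule is_embedding_id_induced_subgraph)
  moreover have "is_embedding (g ^^ n) G (tower n)"
    using is_embedding_layer[of n n] unfolding layer_base_def by simp
  ultimately show ?thesis unfolding equimorphic_def embeds_iff_is_embedding by blast
qed

lemma adj_tower_layer_closed:
  assumes "i \<le> n" and "x \<in> layer n i" and "adj (tower n) x y"
  shows "y \<in> layer n i"
proof -
  obtain j where j: "j \<le> n" "y \<in> layer n j" and xy: "adj G x y"
    using assms(3) unfolding tower_def by auto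
  have "\<not> adj G x y" if "i < j"
    using layers_apart[OF that j(1) assms(2) j(2)] by blast
  moreover have "\<not> adj G x y" if "j < i"
    using layers_apart[OF that assms(1) j(2) assms(2)] is_graph_adj_sym[OF graph] by blast
  ultimately have "i = j" using xy by (meson linorder_neqE_nat)
  then show ?thesis using j(2) by simp
qed

lemma tower_at_least_components: "at_least_components (Suc n) (tower n)"
proof -
  have "at_least_components (card {..n}) (tower n)"
  proof (rule at_least_components_of_closed_parts)
    show "layer n i \<inter> verts (tower n) \<noteq> {}" if "i \<in> {..n}" for i
      using that connected_graph_layer_base[of n i] verts_tower[of n]
      unfolding layer_def connected_graph_def by blast
    show "y \<in> layer n i" if "i \<in> {..n}" "x \<in> layer n i" "adj (tower n) x y" for i x y
      using that adj_tower_layer_closed by simp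
    show "layer n i \<inter> layer n j = {}" if "i \<in> {..n}" "j \<in> {..n}" "i \<noteq> j" for i j
      using that layers_apart[of i j n] layers_apart[of j i n]
      by (cases i j rule: linorder_cases) auto
  qed simp
  then show ?thesis by simp
qed

lemma tower_not_at_least_components:
  assumes "Suc n < k"
  shows "\<not> at_least_components k (tower n)"
proof (rule not_at_least_components_of_connected_parts)
  show "verts (tower n) \<subseteq> (\<Union>i\<in>{..n}. layer n i)" by (simp add: verts_tower)
  show "(adj (tower n))\<^sup>*\<^sup>* x y" if "i \<in> {..n}" "x \<in> layer n i" "y \<in> layer n i" for i x y
  proof -
    have "is_embedding (g ^^ i) (layer_base n i) (tower n)"
      using that(1) by (simp add: is_embedding_layer)
    then show ?thesis
      using that(2,3) unfolding layer_def
      by (rule is_embedding_image_reach[OF is_graph_layer_base connected_graph_layer_base])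
  qed
qed (use assms in simp_all)

lemma at_least_components_tower_iff: "at_least_components k (tower n) \<longleftrightarrow> k \<le> Suc n"
  using tower_at_least_components tower_not_at_least_components at_least_components_mono
  by (meson not_le)

lemma at_least_components_towers_eq_iff:
  "(\<forall>k. at_least_components k (tower m) \<longleftrightarrow> at_least_components k (tower n)) \<longleftrightarrow> m = n"
  unfolding at_least_components_tower_iff by (metis Suc_inject le_antisym order_refl)

lemma inj_tower: "inj tower"
  by (rule injI) (simp flip: at_least_components_towers_eq_iff)

lemma towers_not_isomorphic: "m \<noteq> n \<Longrightarrow> \<not> isomorphic (tower m) (tower n)"
  using isomorphic_at_least_components_iff[OF is_graph_tower is_graph_tower]
    at_least_components_towers_eq_iff by blast

theorem infinite_equimorphic_family:
  "\<exists>S :: 'a graph set. infinite S \<and>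
     (\<forall>K\<in>S. is_graph K \<and> equimorphic K G) \<and>
     (\<forall>K1\<in>S. \<forall>K2\<in>S. K1 \<noteq> K2 \<longrightarrow> \<not> isomorphic K1 K2)"
proof (rule exI[of _ "range tower"], intro conjI)
  show "infinite (range tower)"
  proof
    assume "finite (range tower)"
    then have "finite (UNIV :: nat set)" using inj_tower by (rule finite_imageD)
    then show False by simp
  qed
  show "\<forall>K\<in>range tower. is_graph K \<and> equimorphic K G"
    using is_graph_tower equimorphic_tower by simp
  show "\<forall>K1\<in>range tower. \<forall>K2\<in>range tower. K1 \<noteq> K2 \<longrightarrow> \<not> isomorphic K1 K2"
  proof (intro ballI impI)
    fix K1 K2 assume "K1 \<in> range tower" "K2 \<in> range tower" "K1 \<noteq> K2"
    then obtain m n where "K1 = tower m" "K2 = tower n" "m \<noteq> n" by auto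
    then show "\<not> isomorphic K1 K2" by (simp add: towers_not_isomorphic)
  qed
qed

end

lemma disconnected_equimorphic_obtain_detached_part:
  fixes G :: "'a graph" and H :: "'b graph"
  assumes "is_graph G" and "connected_graph G"
    and "is_graph H" and "equimorphic H G" and "\<not> connected_graph H"
  obtains g B where "self_embedding_with_detached_part G g B"
proof -
  obtain \<phi> \<psi> where \<phi>: "is_embedding \<phi> H G" and \<psi>: "is_embedding \<psi> G H"
    using assms(4) unfolding equimorphic_def embeds_iff_is_embedding by blast
  obtain x0 where x0: "x0 \<in> verts G"
    using assms(2) unfolding connected_graph_def by blast
  have "\<psi> x0 \<in> verts H" using \<psi> x0 by (rule is_embedding_verts)
  with assms(3) obtain d where d: "d \<in> verts H" "d \<notin> component H (\<psi> x0)"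
    using assms(5) by (rule not_connected_graph_obtain_far_vertex)
  define D where "D = component H d"
  have D_subset: "D \<subseteq> verts H"
    unfolding D_def using assms(3) d(1) by (rule component_subset)
  have image_outside: "\<psi> v \<notin> D" if "v \<in> verts G" for v
  proof
    assume "\<psi> v \<in> D"
    then have "(adj H)\<^sup>*\<^sup>* (\<psi> v) d"
      using is_graph_reach_sym[OF assms(3)] unfolding D_def component_def by blast
    moreover have "(adj H)\<^sup>*\<^sup>* (\<psi> x0) (\<psi> v)"
      using x0 that is_embedding_image_reach[OF assms(1,2) \<psi>] by blast
    ultimately have "(adj H)\<^sup>*\<^sup>* (\<psi> x0) d"
      by (rule rtranclp_trans[rotated])
    with d(2) show False unfolding component_def by simp
  qed
  have "self_embedding_with_detached_part G (\<phi> \<circ> \<psi>) (\<phi> ` D)"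
  proof (rule self_embedding_with_detached_part.intro)
    show "is_graph G" "connected_graph G" by (fact assms(1,2))+
    show "is_embedding (\<phi> \<circ> \<psi>) G G" using \<psi> \<phi> by (rule is_embedding_comp)
    show "\<phi> ` D \<subseteq> verts G" using D_subset is_embedding_verts[OF \<phi>] by blast
    have "connected_graph (induced_subgraph G (\<phi> ` verts (induced_subgraph H D)))"
      using is_graph_induced_subgraph[OF assms(3)] connected_graph_component[OF assms(3) d(1)]
        is_embedding_restrict[OF \<phi>]
      unfolding D_def by (rule connected_graph_image)
    then show "connected_graph (induced_subgraph G (\<phi> ` D))"
      using D_subset by (simp add: Int_absorb2)
    fix b v assume "b \<in> \<phi> ` D" and v: "v \<in> verts G"
    then obtain y where y: "y \<in> D" "b = \<phi> y" by blast
    have yH: "y \<in> verts H" using y(1) D_subset by blast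
    have \<psi>vH: "\<psi> v \<in> verts H" using \<psi> v by (rule is_embedding_verts)
    have \<psi>vD: "\<psi> v \<notin> D" using v by (rule image_outside)
    have "y \<noteq> \<psi> v" using y(1) \<psi>vD by blast
    then have "\<phi> y \<noteq> \<phi> (\<psi> v)"
      using is_embedding_inj[OF \<phi>] yH \<psi>vH by (simp add: inj_on_eq_iff)
    moreover have "\<not> adj H y (\<psi> v)"
      using component_adj_closed[of y H d "\<psi> v"] y(1) \<psi>vD unfolding D_def by blast
    then have "\<not> adj G (\<phi> y) (\<phi> (\<psi> v))"
      using is_embedding_adj[OF \<phi> yH \<psi>vH] by simp
    ultimately show "b \<noteq> (\<phi> \<circ> \<psi>) v \<and> \<not> adj G b ((\<phi> \<circ> \<psi>) v)"
      using y(2) by simp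
  qed
  then show ?thesis by (rule that)
qed

theorem lemma1p4:
  fixes G :: "'a graph" and H :: "'b graph"
  assumes "is_graph G" and "connected_graph G"
    and "is_graph H" and "equimorphic H G" and "\<not> connected_graph H"
  shows "\<exists>S :: 'a graph set. infinite S \<and>
           (\<forall>K\<in>S. is_graph K \<and> equimorphic K G) \<and>
           (\<forall>K1\<in>S. \<forall>K2\<in>S. K1 \<noteq> K2 \<longrightarrow> \<not> isomorphic K1 K2)"
proof -
  obtain g B where "self_embedding_with_detached_part G g B"
    using assms by (rule disconnected_equimorphic_obtain_detached_part)
  then show ?thesis by (rule self_embedding_with_detached_part.infinite_equimorphic_family)
qed

end
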